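(* Let $\rho$ be a $3$-dimensional continuous representation of $\mathcal{G}_{\mathbb{Q}_p}$ over $\overline{\mathbb{F}_p}$ of the form $\begin{psmallmatrix}\chi_1&\delta_a&\epsilon\\&\chi_2&\delta_b\\&&\chi_3\end{psmallmatrix}$ in a basis $e_1,e_2,e_3$, with characters $\chi_1,\chi_2,\chi_3$ satisfying $\chi_i\chi_j^{-1}\notin\{1,\omega,\omega^{-1}\}$ for $i\neq j$. Then $\Lambda^2\rho$ has length $3$ with a composition series whose successive factors (from sub to quotient) are $\chi_1\chi_2$, $\chi_1\chi_3$, $\chi_2\chi_3$. Moreover the socle (resp. cosocle) of $\Lambda^2\rho$ has the same dimension as the cosocle (resp. socle) of $\rho$.
   Context: $\omega$ is the mod $p$ cyclotomic character of $\mathcal{G}_{\mathbb{Q}_p}$; $\delta_a,\delta_b,\epsilon$ denote the off-diagonal entries of the matrix representation. *)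

theory Defs
  imports "HOL-Analysis.Analysis" "HOL-Computational_Algebra.Polynomial" "HOL-Algebra.Group"
begin

text \<open>Abstract setting: G is a group (standing in for the absolute Galois group of Q_p),
  k a field (standing in for an algebraic closure of F_p).\<close>

definition is_rep :: "('g, 'h) monoid_scheme \<Rightarrow> ('g \<Rightarrow> 'k::field ^'n ^'n) \<Rightarrow> bool" where
  "is_rep G R \<longleftrightarrow> R \<one>\<^bsub>G\<^esub> = mat 1 \<and>
     (\<forall>g\<in>carrier G. \<forall>h\<in>carrier G. R (g \<otimes>\<^bsub>G\<^esub> h) = R g ** R h)"

definition is_character :: "('g, 'h) monoid_scheme \<Rightarrow> ('g \<Rightarrow> 'k::field) \<Rightarrow> bool" where
  "is_character G c \<longleftrightarrow> c \<one>\<^bsub>G\<^esub> = 1 \<and> (\<forall>g\<in>carrier G. c g \<noteq> 0) \<and>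
     (\<forall>g\<in>carrier G. \<forall>h\<in>carrier G. c (g \<otimes>\<^bsub>G\<^esub> h) = c g * c h)"

definition char_eq :: "('g, 'h) monoid_scheme \<Rightarrow> ('g \<Rightarrow> 'k) \<Rightarrow> ('g \<Rightarrow> 'k) \<Rightarrow> bool" where
  "char_eq G c \<psi> \<longleftrightarrow> (\<forall>g\<in>carrier G. c g = \<psi> g)"

definition upper3 :: "'k::field \<Rightarrow> 'k \<Rightarrow> 'k \<Rightarrow> 'k \<Rightarrow> 'k \<Rightarrow> 'k \<Rightarrow> 'k ^3 ^3" where
  "upper3 a b c d e f = (\<chi> i j.
      if i = 1 \<and> j = 1 then a else if i = 1 \<and> j = 2 then d else if i = 1 \<and> j = 3 then f
      else if i = 2 \<and> j = 2 then b else if i = 2 \<and> j = 3 then e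
      else if i = 3 \<and> j = 3 then c else 0)"

text \<open>Second exterior power of a 3x3 matrix, in the basis e1/\e2, e1/\e3, e2/\e3
  (indices 1,2,3).\<close>
definition wedge_idx :: "3 \<Rightarrow> 3 \<times> 3" where
  "wedge_idx r = (if r = 1 then (1, 2) else if r = 2 then (1, 3) else (2, 3))"

definition ext2 :: "'k::comm_ring_1 ^3 ^3 \<Rightarrow> 'k ^3 ^3" where
  "ext2 A = (\<chi> r s. (case wedge_idx r of (i, j) \<Rightarrow> case wedge_idx s of (k, l) \<Rightarrow>
      A $ i $ k * A $ j $ l - A $ i $ l * A $ j $ k))"

definition invariant :: "('g, 'h) monoid_scheme \<Rightarrow> ('g \<Rightarrow> 'k::field ^'n ^'n) \<Rightarrow> ('k ^'n) set \<Rightarrow> bool" where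
  "invariant G R W \<longleftrightarrow> vec.subspace W \<and> (\<forall>g\<in>carrier G. \<forall>w\<in>W. R g *v w \<in> W)"

definition irreducible_sub :: "('g, 'h) monoid_scheme \<Rightarrow> ('g \<Rightarrow> 'k::field ^'n ^'n) \<Rightarrow> ('k ^'n) set \<Rightarrow> bool" where
  "irreducible_sub G R W \<longleftrightarrow> invariant G R W \<and> W \<noteq> {0} \<and>
     (\<forall>U. invariant G R U \<and> U \<subseteq> W \<longrightarrow> U = {0} \<or> U = W)"

definition maximal_sub :: "('g, 'h) monoid_scheme \<Rightarrow> ('g \<Rightarrow> 'k::field ^'n ^'n) \<Rightarrow> ('k ^'n) set \<Rightarrow> bool" where
  "maximal_sub G R W \<longleftrightarrow> invariant G R W \<and> W \<noteq> UNIV \<and>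
     (\<forall>U. invariant G R U \<and> W \<subseteq> U \<longrightarrow> U = W \<or> U = UNIV)"

definition socle :: "('g, 'h) monoid_scheme \<Rightarrow> ('g \<Rightarrow> 'k::field ^'n ^'n) \<Rightarrow> ('k ^'n) set" where
  "socle G R = vec.span (\<Union>{W. irreducible_sub G R W})"

text \<open>Radical: intersection of all maximal subrepresentations; the cosocle is V / radical.\<close>
definition radical :: "('g, 'h) monoid_scheme \<Rightarrow> ('g \<Rightarrow> 'k::field ^'n ^'n) \<Rightarrow> ('k ^'n) set" where
  "radical G R = \<Inter>{W. maximal_sub G R W}"

definition socle_dim :: "('g, 'h) monoid_scheme \<Rightarrow> ('g \<Rightarrow> 'k::field ^'n ^'n) \<Rightarrow> nat" where
  "socle_dim G R = vec.dim (socle G R)"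

definition cosocle_dim :: "('g, 'h) monoid_scheme \<Rightarrow> ('g \<Rightarrow> 'k::field ^'n ^'n) \<Rightarrow> nat" where
  "cosocle_dim G R = CARD('n) - vec.dim (radical G R)"

definition comp_series :: "('g, 'h) monoid_scheme \<Rightarrow> ('g \<Rightarrow> 'k::field ^'n ^'n) \<Rightarrow> ('k ^'n) set list \<Rightarrow> bool" where
  "comp_series G R Ws \<longleftrightarrow> Ws \<noteq> [] \<and> hd Ws = {0} \<and> last Ws = UNIV \<and>
     (\<forall>W\<in>set Ws. invariant G R W) \<and>
     (\<forall>i. Suc i < length Ws \<longrightarrow> Ws ! i \<subset> Ws ! Suc i \<and>
        (\<forall>U. invariant G R U \<and> Ws ! i \<subseteq> U \<and> U \<subseteq> Ws ! Suc i \<longrightarrow> U = Ws ! i \<or> U = Ws ! Suc i))"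

text \<open>Length of a representation: the number of factors of a composition series
  (well defined by Jordan-Hoelder).\<close>
definition rep_length :: "('g, 'h) monoid_scheme \<Rightarrow> ('g \<Rightarrow> 'k::field ^'n ^'n) \<Rightarrow> nat" where
  "rep_length G R = (THE m. \<exists>Ws. comp_series G R Ws \<and> length Ws = Suc m)"

definition factor_is :: "('g, 'h) monoid_scheme \<Rightarrow> ('g \<Rightarrow> 'k::field ^'n ^'n) \<Rightarrow> ('k ^'n) set \<Rightarrow> ('k ^'n) set \<Rightarrow> ('g \<Rightarrow> 'k) \<Rightarrow> bool" where
  "factor_is G R U W \<psi> \<longleftrightarrow> U \<subseteq> W \<and> vec.dim W = vec.dim U + 1 \<and>
     (\<forall>g\<in>carrier G. \<forall>w\<in>W. R g *v w - \<psi> g *s w \<in> U)"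

definition generic_pair :: "('g, 'h) monoid_scheme \<Rightarrow> ('g \<Rightarrow> 'k::field) \<Rightarrow> ('g \<Rightarrow> 'k) \<Rightarrow> ('g \<Rightarrow> 'k) \<Rightarrow> bool" where
  "generic_pair G \<omega> c \<psi> \<longleftrightarrow> \<not> char_eq G (\<lambda>g. c g / \<psi> g) (\<lambda>g. 1) \<and>
     \<not> char_eq G (\<lambda>g. c g / \<psi> g) \<omega> \<and> \<not> char_eq G (\<lambda>g. c g / \<psi> g) (\<lambda>g. inverse (\<omega> g))"

end

theory Submission
  imports Defs
begin

(* For a 3-dimensional representation, the pairing k^3 x Lambda^2 k^3 -> Lambda^3 k^3 = k,
   (x, y) |-> x /\ y, satisfies rho(g) x /\ Lambda^2 rho(g) y = det rho(g) (x /\ y).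
   Taking annihilators for this perfect pairing therefore reverses inclusions between
   subrepresentations of rho and of Lambda^2 rho, exchanging irreducible and maximal ones:
   the socle of Lambda^2 rho is the annihilator of the radical of rho, and vice versa.
   Lambda^2 of an upper triangular rho is again upper triangular, with diagonal
   chi1 chi2, chi1 chi3, chi2 chi3, so the standard flag is a composition series with these
   factors; every simple subquotient of a triangular representation is a line, hence every
   composition series has length 3. *)

section \<open>The wedge pairing on k^3\<close>

(* x /\ y for x in k^3 and y in Lambda^2 k^3 written in the basis e1/\e2, e1/\e3, e2/\e3 of ext2. *)
definition wedge_pairing :: "'k::field ^3 \<Rightarrow> 'k ^3 \<Rightarrow> 'k" where
  "wedge_pairing x y = x$1 * y$3 - x$2 * y$2 + x$3 * y$1"

definition annihilator :: "('k::field ^3) set \<Rightarrow> ('k ^3) set" where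
  "annihilator W = {y. \<forall>x\<in>W. wedge_pairing x y = 0}"

lemma wedge_pairing_commute: "wedge_pairing x y = wedge_pairing y x"
  by (simp add: wedge_pairing_def algebra_simps)

lemma wedge_pairing_right_simps [simp]:
  "wedge_pairing x (y + z) = wedge_pairing x y + wedge_pairing x z"
  "wedge_pairing x (y - z) = wedge_pairing x y - wedge_pairing x z"
  "wedge_pairing x (c *s y) = c * wedge_pairing x y"
  "wedge_pairing x 0 = 0"
  by (simp_all add: wedge_pairing_def algebra_simps)

lemma subspace_annihilator: "vec.subspace (annihilator W)"
  unfolding vec.subspace_def annihilator_def by simp

lemma annihilator_antimono: "A \<subseteq> B \<Longrightarrow> annihilator B \<subseteq> annihilator A"
  unfolding annihilator_def by auto

lemma annihilator_insert: "annihilator (insert b X) = annihilator X \<inter> {y. wedge_pairing b y = 0}"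
  unfolding annihilator_def by auto

lemma annihilator_Union: "annihilator (\<Union>C) = \<Inter>(annihilator ` C)"
  unfolding annihilator_def by auto

lemma annihilator_empty [simp]: "annihilator {} = UNIV"
  unfolding annihilator_def by auto

lemma annihilator_zero [simp]: "annihilator {0} = UNIV"
  unfolding annihilator_def by (simp add: wedge_pairing_def)

lemma annihilator_span: "annihilator (vec.span X) = annihilator X"
proof
  show "annihilator (vec.span X) \<subseteq> annihilator X"
    by (rule annihilator_antimono[OF vec.span_superset])
  show "annihilator X \<subseteq> annihilator (vec.span X)"
  proof
    fix y assume y: "y \<in> annihilator X"
    have "vec.subspace {x. wedge_pairing x y = 0}"
      unfolding vec.subspace_def by (simp add: wedge_pairing_commute[of _ y])
    moreover have "X \<subseteq> {x. wedge_pairing x y = 0}"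
      using y by (auto simp: annihilator_def)
    ultimately have "vec.span X \<subseteq> {x. wedge_pairing x y = 0}"
      by (rule vec.span_minimal[rotated])
    then show "y \<in> annihilator (vec.span X)"
      by (auto simp: annihilator_def)
  qed
qed

lemma dim_le_dim_inter_kernel:
  assumes S: "vec.subspace S"
  shows "vec.dim S \<le> vec.dim (S \<inter> {y. wedge_pairing b y = 0}) + 1"
proof (cases "S \<subseteq> {y. wedge_pairing b y = 0}")
  case True
  then show ?thesis by (simp add: Int_absorb2)
next
  case False
  then obtain s0 where s0: "s0 \<in> S" "wedge_pairing b s0 \<noteq> 0" by auto
  let ?K = "S \<inter> {y. wedge_pairing b y = 0}"
  have "S \<subseteq> vec.span (insert s0 ?K)"
  proof
    fix s assume s: "s \<in> S"
    define t where "t = wedge_pairing b s / wedge_pairing b s0"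
    have "s - t *s s0 \<in> ?K"
      using s s0 S by (simp add: t_def vec.subspace_diff vec.subspace_scale)
    then have "(s - t *s s0) + t *s s0 \<in> vec.span (insert s0 ?K)"
      by (intro vec.span_add vec.span_scale) (simp_all add: vec.span_base)
    then show "s \<in> vec.span (insert s0 ?K)" by simp
  qed
  then have "vec.dim S \<le> vec.dim (insert s0 ?K)" by (rule vec.dim_mono)
  also have "\<dots> \<le> vec.dim ?K + 1" by (simp add: vec.dim_insert)
  finally show ?thesis .
qed

lemma wedge_pairing_separates:
  assumes ind: "vec.independent X" and b: "b \<notin> vec.span X"
  shows "\<exists>y. (\<forall>x\<in>X. wedge_pairing x y = 0) \<and> wedge_pairing b y \<noteq> (0::'k::field)"
proof -
  have indB: "vec.independent (insert b X)"
    using ind b by (simp add: vec.independent_insertI)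
  define \<phi> where "\<phi> = vec.construct (insert b X) (\<lambda>z. if z = b then axis 1 1 else (0::'k^3))"
  have lin: "Vector_Spaces.linear (*s) (*s) \<phi>"
    unfolding \<phi>_def by (rule vec.linear_construct[OF indB])
  define c where "c i = \<phi> (axis i 1) $ 1" for i
  define y :: "'k^3" where "y = (\<chi> i. if i = 1 then c 3 else if i = 2 then - c 2 else c 1)"
  have represents: "wedge_pairing z y = \<phi> z $ 1" for z
  proof -
    have "\<phi> z $ 1 = (\<Sum>i\<in>UNIV. z$i * c i)"
      using linear_componentwise[OF lin, of z 1] by (simp add: c_def)
    then show ?thesis by (simp add: wedge_pairing_def y_def sum_3)
  qed
  have "\<phi> x = 0" if "x \<in> X" for x
  proof -
    have "x \<noteq> b" using that b vec.span_base by blast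
    then show ?thesis
      unfolding \<phi>_def using that by (subst vec.construct_basis[OF indB]) auto
  qed
  moreover have "\<phi> b = axis 1 1"
    unfolding \<phi>_def by (subst vec.construct_basis[OF indB]) auto
  ultimately show ?thesis
    by (intro exI[of _ y]) (simp add: represents axis_def)
qed

lemma dim_annihilator_independent:
  assumes "finite X" "vec.independent (X :: ('k::field^3) set)"
  shows "vec.dim (annihilator X) + card X = 3"
  using assms
proof (induction X rule: finite_induct)
  case empty
  show ?case by (simp add: card_cart_basis)
next
  case (insert b X)
  have indX: "vec.independent X" and bX: "b \<notin> vec.span X"
    using insert.prems insert.hyps(2) by (auto simp: vec.independent_insert)
  have le: "vec.dim (annihilator X) \<le> vec.dim (annihilator (insert b X)) + 1"
    unfolding annihilator_insert by (rule dim_le_dim_inter_kernel[OF subspace_annihilator])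
  obtain y where "\<forall>x\<in>X. wedge_pairing x y = 0" "wedge_pairing b y \<noteq> 0"
    using wedge_pairing_separates[OF indX bX] by blast
  then have "annihilator (insert b X) \<subset> annihilator X"
    by (auto simp: annihilator_def)
  then have "vec.dim (annihilator (insert b X)) < vec.dim (annihilator X)"
    by (simp add: vec.dim_psubset subspace_annihilator vec.span_eq_iff[THEN iffD2])
  then show ?case using insert.IH[OF indX] le insert.hyps by simp
qed

lemma dim_annihilator:
  assumes W: "vec.subspace (W :: ('k::field^3) set)"
  shows "vec.dim (annihilator W) + vec.dim W = 3"
proof -
  obtain B where B: "B \<subseteq> W" "vec.independent B" "W \<subseteq> vec.span B" "card B = vec.dim W"
    using vec.basis_exists by blast
  have "W = vec.span B"
    using B vec.span_minimal[OF B(1) W] by auto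
  then have "annihilator W = annihilator B" by (simp add: annihilator_span)
  then show ?thesis
    using dim_annihilator_independent[OF vec.finiteI_independent[OF B(2)] B(2)] B(4) by simp
qed

lemma annihilator_annihilator:
  assumes W: "vec.subspace (W :: ('k::field^3) set)"
  shows "annihilator (annihilator W) = W"
proof -
  have "W \<subseteq> annihilator (annihilator W)"
    unfolding annihilator_def by (auto simp: wedge_pairing_commute)
  moreover have "vec.dim (annihilator (annihilator W)) \<le> vec.dim W"
    using dim_annihilator[OF subspace_annihilator, of W] dim_annihilator[OF W] by simp
  ultimately have "W = annihilator (annihilator W)"
    by (rule vec.subspace_dim_equal[OF W subspace_annihilator])
  then show ?thesis by simp
qed

lemma annihilator_UNIV [simp]: "annihilator (UNIV::('k::field^3) set) = {0}"
  using annihilator_annihilator[of "{0}"] by (simp add: vec.subspace_0)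

lemma annihilator_Inter:
  assumes "\<And>A. A \<in> C \<Longrightarrow> vec.subspace (A::('k::field^3) set)"
  shows "annihilator (\<Inter>C) = vec.span (\<Union>(annihilator ` C))"
proof -
  have "\<Inter>C = annihilator (vec.span (\<Union>(annihilator ` C)))"
    using assms by (simp add: annihilator_span annihilator_Union annihilator_annihilator)
  then show ?thesis
    by (simp add: annihilator_annihilator)
qed

section \<open>Representations dual under the wedge pairing\<close>

lemma rep_apply_inv:
  assumes "group G" "is_rep G R" "g \<in> carrier G"
  shows "R g *v (R (inv\<^bsub>G\<^esub> g) *v x) = x"
proof -
  have "R g ** R (inv\<^bsub>G\<^esub> g) = mat 1"
    using assms by (metis group.inv_closed group.r_inv is_rep_def)
  then show ?thesis by (simp add: matrix_vector_mul_assoc)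
qed

lemma invariant_subspace: "invariant G R W \<Longrightarrow> vec.subspace W"
  by (simp add: invariant_def)

locale wedge_dual_reps =
  fixes G :: "('g, 'h) monoid_scheme" and R E :: "'g \<Rightarrow> 'k::field ^3 ^3"
  assumes group_G: "group G" and rep_R: "is_rep G R" and rep_E: "is_rep G E"
    and wedge_pairing_twisted:
      "\<And>g. g \<in> carrier G \<Longrightarrow> \<exists>c. \<forall>x y. wedge_pairing (R g *v x) (E g *v y) = c * wedge_pairing x y"
begin

lemma swap: "wedge_dual_reps G E R"
proof (rule wedge_dual_reps.intro[OF group_G rep_E rep_R])
  fix g assume "g \<in> carrier G"
  then obtain c where c: "\<And>x y. wedge_pairing (R g *v x) (E g *v y) = c * wedge_pairing x y"
    using wedge_pairing_twisted by blast
  have "wedge_pairing (E g *v x) (R g *v y) = c * wedge_pairing x y" for x y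
    using c[of y x] by (simp only: wedge_pairing_commute)
  then show "\<exists>c. \<forall>x y. wedge_pairing (E g *v x) (R g *v y) = c * wedge_pairing x y"
    by blast
qed

lemma invariant_annihilator:
  assumes W: "invariant G R W"
  shows "invariant G E (annihilator W)"
  unfolding invariant_def
proof (intro conjI ballI subspace_annihilator)
  fix g y assume g: "g \<in> carrier G" and y: "y \<in> annihilator W"
  obtain c where c: "\<And>x y. wedge_pairing (R g *v x) (E g *v y) = c * wedge_pairing x y"
    using wedge_pairing_twisted[OF g] by blast
  show "E g *v y \<in> annihilator W"
    unfolding annihilator_def
  proof (intro CollectI ballI)
    fix x assume "x \<in> W"
    \<comment> \<open>write \<open>x = R g (R g\<inverse> x)\<close> with \<open>R g\<inverse> x \<in> W\<close>\<close>
    then have "wedge_pairing (R (inv\<^bsub>G\<^esub> g) *v x) y = 0"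
      using W y g group_G by (auto simp: invariant_def annihilator_def)
    then show "wedge_pairing x (E g *v y) = 0"
      using c[of "R (inv\<^bsub>G\<^esub> g) *v x" y] rep_apply_inv[OF group_G rep_R g] by simp
  qed
qed

lemma maximal_sub_annihilator:
  assumes W: "irreducible_sub G R W"
  shows "maximal_sub G E (annihilator W)"
proof -
  have WI: "invariant G R W" and W0: "W \<noteq> {0}"
    and Wmin: "\<And>U. invariant G R U \<Longrightarrow> U \<subseteq> W \<Longrightarrow> U = {0} \<or> U = W"
    using W by (auto simp: irreducible_sub_def)
  have Ws: "vec.subspace W" using WI by (rule invariant_subspace)
  have "annihilator W \<noteq> UNIV"
    using annihilator_annihilator[OF Ws] W0 by force
  moreover have "U = annihilator W \<or> U = UNIV"
    if U: "invariant G E U" "annihilator W \<subseteq> U" for U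
  proof -
    have "annihilator U \<subseteq> W"
      using annihilator_antimono[OF U(2)] annihilator_annihilator[OF Ws] by simp
    then have "annihilator U = {0} \<or> annihilator U = W"
      using Wmin wedge_dual_reps.invariant_annihilator[OF swap U(1)] by blast
    then show ?thesis
      using annihilator_annihilator[OF invariant_subspace[OF U(1)]] by force
  qed
  ultimately show ?thesis
    unfolding maximal_sub_def using invariant_annihilator[OF WI] by blast
qed

lemma irreducible_sub_annihilator:
  assumes W: "maximal_sub G R W"
  shows "irreducible_sub G E (annihilator W)"
proof -
  have WI: "invariant G R W" and W1: "W \<noteq> UNIV"
    and Wmax: "\<And>U. invariant G R U \<Longrightarrow> W \<subseteq> U \<Longrightarrow> U = W \<or> U = UNIV"
    using W by (auto simp: maximal_sub_def)
  have Ws: "vec.subspace W" using WI by (rule invariant_subspace)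
  have "annihilator W \<noteq> {0}"
    using annihilator_annihilator[OF Ws] W1 by force
  moreover have "U = {0} \<or> U = annihilator W"
    if U: "invariant G E U" "U \<subseteq> annihilator W" for U
  proof -
    have "W \<subseteq> annihilator U"
      using annihilator_antimono[OF U(2)] annihilator_annihilator[OF Ws] by simp
    then have "annihilator U = W \<or> annihilator U = UNIV"
      using Wmax wedge_dual_reps.invariant_annihilator[OF swap U(1)] by blast
    then show ?thesis
      using annihilator_annihilator[OF invariant_subspace[OF U(1)]] by force
  qed
  ultimately show ?thesis
    unfolding irreducible_sub_def using invariant_annihilator[OF WI] by blast
qed

lemma irreducible_subs_eq: "{Y. irreducible_sub G E Y} = annihilator ` {M. maximal_sub G R M}"
proof (intro equalityI subsetI)
  fix Y assume "Y \<in> {Y. irreducible_sub G E Y}"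
  then have "maximal_sub G R (annihilator Y)" "Y = annihilator (annihilator Y)"
    using wedge_dual_reps.maximal_sub_annihilator[OF swap] annihilator_annihilator
    by (auto simp: irreducible_sub_def invariant_def)
  then show "Y \<in> annihilator ` {M. maximal_sub G R M}" by blast
qed (use irreducible_sub_annihilator in blast)

lemma maximal_subs_eq: "{Y. maximal_sub G E Y} = annihilator ` {M. irreducible_sub G R M}"
proof (intro equalityI subsetI)
  fix Y assume "Y \<in> {Y. maximal_sub G E Y}"
  then have "irreducible_sub G R (annihilator Y)" "Y = annihilator (annihilator Y)"
    using wedge_dual_reps.irreducible_sub_annihilator[OF swap] annihilator_annihilator
    by (auto simp: maximal_sub_def invariant_def)
  then show "Y \<in> annihilator ` {M. irreducible_sub G R M}" by blast
qed (use maximal_sub_annihilator in blast)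

lemma socle_eq_annihilator_radical: "socle G E = annihilator (radical G R)"
  unfolding socle_def radical_def irreducible_subs_eq
  by (rule annihilator_Inter[symmetric]) (auto simp: maximal_sub_def invariant_def)

lemma radical_eq_annihilator_socle: "radical G E = annihilator (socle G R)"
  unfolding socle_def radical_def maximal_subs_eq
  by (simp add: annihilator_span annihilator_Union)

lemma socle_dim_eq_cosocle_dim: "socle_dim G E = cosocle_dim G R"
proof -
  have "vec.subspace (radical G R)"
    unfolding radical_def
    by (rule vec.subspace_Inter) (auto simp: maximal_sub_def invariant_def)
  then show ?thesis
    using dim_annihilator[of "radical G R"]
    by (simp add: socle_dim_def cosocle_dim_def socle_eq_annihilator_radical)
qed

lemma cosocle_dim_eq_socle_dim: "cosocle_dim G E = socle_dim G R"
  using dim_annihilator[of "socle G R"]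
  by (simp add: socle_dim_def cosocle_dim_def socle_def radical_eq_annihilator_socle)

end

section \<open>Upper triangular representations\<close>

definition upper_triangular_rep ::
    "('g, 'h) monoid_scheme \<Rightarrow> ('g \<Rightarrow> 'k::field ^3 ^3) \<Rightarrow> ('g \<Rightarrow> 'k) \<Rightarrow> ('g \<Rightarrow> 'k) \<Rightarrow> ('g \<Rightarrow> 'k) \<Rightarrow> bool" where
  "upper_triangular_rep G E a b c \<longleftrightarrow> (\<forall>g\<in>carrier G. \<exists>d e f. E g = upper3 (a g) (b g) (c g) d e f)"

definition flag1 :: "('k::field ^3) set" where
  "flag1 = {x. \<forall>i. i \<notin> {1} \<longrightarrow> x$i = 0}"

definition flag2 :: "('k::field ^3) set" where
  "flag2 = {x. \<forall>i. i \<notin> {1, 2} \<longrightarrow> x$i = 0}"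

lemma mem_flag1: "x \<in> flag1 \<longleftrightarrow> x$2 = 0 \<and> x$3 = 0"
  by (auto simp: flag1_def forall_3)

lemma mem_flag2: "x \<in> flag2 \<longleftrightarrow> x$3 = 0"
  by (auto simp: flag2_def forall_3)

lemma dim_flag1: "vec.dim (flag1 :: ('k::field ^3) set) = 1"
  unfolding flag1_def dim_substandard_cart by simp

lemma dim_flag2: "vec.dim (flag2 :: ('k::field ^3) set) = 2"
  unfolding flag2_def dim_substandard_cart by simp

lemma subspace_flag1: "vec.subspace flag1"
  by (auto simp: vec.subspace_def mem_flag1)

lemma subspace_flag2: "vec.subspace flag2"
  by (auto simp: vec.subspace_def mem_flag2)

lemma upper_triangular_rep_flag:
  assumes "upper_triangular_rep G E a b c" "g \<in> carrier G"
  shows "x \<in> flag1 \<Longrightarrow> E g *v x = a g *s x"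
    and "x \<in> flag2 \<Longrightarrow> E g *v x - b g *s x \<in> flag1"
    and "E g *v x - c g *s x \<in> flag2"
proof -
  obtain d e f where E: "E g = upper3 (a g) (b g) (c g) d e f"
    using assms by (auto simp: upper_triangular_rep_def)
  have mv: "(E g *v x) $ 1 = a g * x$1 + d * x$2 + f * x$3"
    "(E g *v x) $ 2 = b g * x$2 + e * x$3" "(E g *v x) $ 3 = c g * x$3"
    by (simp_all add: E matrix_vector_mult_def sum_3 upper3_def)
  show "x \<in> flag1 \<Longrightarrow> E g *v x = a g *s x"
    by (simp add: vec_eq_iff forall_3 mv mem_flag1)
  show "x \<in> flag2 \<Longrightarrow> E g *v x - b g *s x \<in> flag1"
    by (simp add: mv mem_flag1 mem_flag2)
  show "E g *v x - c g *s x \<in> flag2"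
    by (simp add: mv mem_flag2)
qed

lemma upper_triangular_rep_invariant_flag:
  assumes "upper_triangular_rep G E a b c"
  shows "invariant G E flag1" "invariant G E flag2"
proof -
  show "invariant G E flag1"
    using upper_triangular_rep_flag(1)[OF assms] subspace_flag1
    by (auto simp: invariant_def vec.subspace_scale)
  have "E g *v x \<in> flag2" if "g \<in> carrier G" "x \<in> flag2" for g x
    using upper_triangular_rep_flag(2)[OF assms that] that(2) by (simp add: mem_flag1 mem_flag2)
  then show "invariant G E flag2"
    using subspace_flag2 by (simp add: invariant_def)
qed

(* The least flag member whose intersection with W is not contained in U supplies the vector. *)
lemma upper_triangular_rep_eigenvector_mod:
  assumes up: "upper_triangular_rep G E a b c"
    and U: "invariant G E U" and W: "invariant G E W" and UW: "U \<subset> W"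
  shows "\<exists>v\<in>W - U. \<exists>t. \<forall>g\<in>carrier G. E g *v v - t g *s v \<in> U"
proof -
  have diff_in_W: "E g *v v - t *s v \<in> W" if "g \<in> carrier G" "v \<in> W" for g v t
    using W that by (simp add: invariant_def vec.subspace_diff vec.subspace_scale)
  consider (line) v where "v \<in> W - U" "v \<in> flag1"
    | (plane) v where "W \<inter> flag1 \<subseteq> U" "v \<in> W - U" "v \<in> flag2"
    | (space) "W \<inter> flag2 \<subseteq> U"
    by blast
  then show ?thesis
  proof cases
    case line
    then have "\<forall>g\<in>carrier G. E g *v v - a g *s v \<in> U"
      using upper_triangular_rep_flag(1)[OF up] U by (simp add: invariant_def vec.subspace_0)
    then show ?thesis using line(1) by blast
  next
    case plane
    then show ?thesis
      using upper_triangular_rep_flag(2)[OF up] diff_in_W by blast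
  next
    case space
    moreover obtain v where "v \<in> W - U" using UW by blast
    ultimately show ?thesis
      using upper_triangular_rep_flag(3)[OF up] diff_in_W by blast
  qed
qed

lemma invariant_span_insert:
  assumes U: "invariant G E U" and v: "\<forall>g\<in>carrier G. E g *v v - t g *s v \<in> U"
  shows "invariant G E (vec.span (insert v U))"
  unfolding invariant_def
proof (intro conjI ballI vec.subspace_span)
  fix g z assume g: "g \<in> carrier G" and z: "z \<in> vec.span (insert v U)"
  let ?X = "vec.span (insert v U)"
  have "E g *v v = (E g *v v - t g *s v) + t g *s v" by simp
  also have "\<dots> \<in> ?X"
    using v g by (intro vec.span_add vec.span_scale) (auto intro: vec.span_base)
  finally have "insert v U \<subseteq> {z. E g *v z \<in> ?X}"
    using U g by (auto simp: invariant_def intro: vec.span_base)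
  moreover have "vec.subspace {z. E g *v z \<in> ?X}"
    using vec.subspace_span[of "insert v U"]
    by (auto simp: vec.subspace_def matrix_vector_right_distrib vector_scalar_commute)
  ultimately have "?X \<subseteq> {z. E g *v z \<in> ?X}"
    by (rule vec.span_minimal)
  then show "E g *v z \<in> ?X" using z by blast
qed

lemma subspace_between_dim_Suc:
  assumes "vec.subspace A" "vec.subspace B" "vec.subspace U"
    and "A \<subseteq> U" "U \<subseteq> B" "vec.dim B = vec.dim A + 1"
  shows "U = A \<or> U = B"
proof -
  have "vec.dim A \<le> vec.dim U" "vec.dim U \<le> vec.dim B"
    using assms(4,5) by (simp_all add: vec.dim_subset)
  then show ?thesis
    using assms vec.subspace_dim_equal by (metis le_SucE Suc_eq_plus1)
qed

lemma upper_triangular_rep_simple_step_dim: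
  assumes up: "upper_triangular_rep G E a b c"
    and U: "invariant G E U" and W: "invariant G E W" and UW: "U \<subset> W"
    and simple: "\<forall>X. invariant G E X \<and> U \<subseteq> X \<and> X \<subseteq> W \<longrightarrow> X = U \<or> X = W"
  shows "vec.dim W = vec.dim U + 1"
proof -
  obtain v t where v: "v \<in> W" "v \<notin> U" "\<forall>g\<in>carrier G. E g *v v - t g *s v \<in> U"
    using upper_triangular_rep_eigenvector_mod[OF up U W UW] by blast
  let ?X = "vec.span (insert v U)"
  have "U \<subseteq> ?X" by (meson subset_insertI vec.span_superset order_trans)
  moreover have "?X \<subseteq> W"
    using v(1) UW invariant_subspace[OF W] by (intro vec.span_minimal) auto
  moreover have "?X \<noteq> U" using v(2) vec.span_base[of v "insert v U"] by auto
  ultimately have "?X = W"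
    using simple invariant_span_insert[OF U v(3)] by blast
  moreover have "v \<notin> vec.span U"
    using v(2) invariant_subspace[OF U] vec.span_eq_iff by blast
  ultimately show ?thesis
    using vec.dim_insert[of v U] vec.dim_span[of "insert v U"] by simp
qed

lemma upper_triangular_rep_comp_series_length:
  assumes up: "upper_triangular_rep G E a b c" and cs: "comp_series G E Ws"
  shows "length Ws = 4"
proof -
  have ne: "Ws \<noteq> []" and hd: "hd Ws = {0}" and last: "last Ws = UNIV"
    and inv: "\<And>W. W \<in> set Ws \<Longrightarrow> invariant G E W"
    and step: "\<And>i. Suc i < length Ws \<Longrightarrow> Ws ! i \<subset> Ws ! Suc i \<and>
        (\<forall>U. invariant G E U \<and> Ws ! i \<subseteq> U \<and> U \<subseteq> Ws ! Suc i \<longrightarrow> U = Ws ! i \<or> U = Ws ! Suc i)"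
    using cs by (auto simp: comp_series_def)
  have dim_nth: "vec.dim (Ws ! i) = i" if "i < length Ws" for i
    using that
  proof (induction i)
    case 0
    then show ?case using hd ne by (simp add: hd_conv_nth[symmetric])
  next
    case (Suc i)
    have "vec.dim (Ws ! Suc i) = vec.dim (Ws ! i) + 1"
      using step[OF Suc.prems] Suc.prems
      by (intro upper_triangular_rep_simple_step_dim[OF up]) (auto intro: inv)
    then show ?case using Suc by simp
  qed
  have "Ws ! (length Ws - 1) = UNIV" using last ne by (simp add: last_conv_nth)
  then have "length Ws - 1 = 3"
    using dim_nth[of "length Ws - 1"] ne by (simp add: card_cart_basis)
  then show ?thesis by simp
qed

lemma comp_series_flag:
  fixes E :: "'g \<Rightarrow> 'k::field ^3 ^3"
  assumes up: "upper_triangular_rep G E a b c"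
  shows "comp_series G E [{0}, flag1, flag2, UNIV] \<and> factor_is G E {0} flag1 a
    \<and> factor_is G E flag1 flag2 b \<and> factor_is G E flag2 UNIV c"
proof -
  note flag = upper_triangular_rep_flag[OF up]
  have inv: "invariant G E {0}" "invariant G E flag1" "invariant G E flag2" "invariant G E UNIV"
    using upper_triangular_rep_invariant_flag[OF up] by (simp_all add: invariant_def vec.subspace_0)
  have incl: "{0} \<subseteq> flag1" "flag1 \<subseteq> flag2" "flag2 \<subseteq> UNIV"
    by (auto simp: mem_flag1 mem_flag2)
  have dims: "vec.dim flag1 = vec.dim {0::'k^3} + 1" "vec.dim flag2 = vec.dim (flag1::('k^3) set) + 1"
    "vec.dim (UNIV::('k^3) set) = vec.dim (flag2::('k^3) set) + 1"
    by (simp_all add: dim_flag1 dim_flag2 card_cart_basis)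
  have simple: "A \<subset> B \<and> (\<forall>U. invariant G E U \<and> A \<subseteq> U \<and> U \<subseteq> B \<longrightarrow> U = A \<or> U = B)"
    if "invariant G E A" "invariant G E B" "A \<subseteq> B" "vec.dim B = vec.dim A + (1::nat)" for A B
    using that subspace_between_dim_Suc[of A B] by (auto simp: invariant_def)
  have "comp_series G E [{0}, flag1, flag2, UNIV]"
    using simple[OF inv(1,2) incl(1) dims(1)] simple[OF inv(2,3) incl(2) dims(2)]
      simple[OF inv(3,4) incl(3) dims(3)] inv
    by (auto simp: comp_series_def less_Suc_eq numeral_eq_Suc)
  moreover have "factor_is G E {0} flag1 a" "factor_is G E flag1 flag2 b" "factor_is G E flag2 UNIV c"
    using incl dims flag by (simp_all add: factor_is_def)
  ultimately show ?thesis by blast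
qed

lemma rep_length_upper_triangular:
  assumes up: "upper_triangular_rep G E a b c"
  shows "rep_length G E = 3"
  unfolding rep_length_def
proof (rule the_equality)
  show "\<exists>Ws. comp_series G E Ws \<and> length Ws = Suc 3"
    using comp_series_flag[OF up] by (intro exI[of _ "[{0}, flag1, flag2, UNIV]"]) auto
  show "m = 3" if "\<exists>Ws. comp_series G E Ws \<and> length Ws = Suc m" for m
    using that upper_triangular_rep_comp_series_length[OF up] by fastforce
qed

section \<open>The exterior square\<close>

lemma wedge_idx_simps: "wedge_idx 1 = (1, 2)" "wedge_idx 2 = (1, 3)" "wedge_idx 3 = (2, 3)"
  by (simp_all add: wedge_idx_def)

lemma ext2_upper3:
  "ext2 (upper3 a b c d e f) = upper3 (a*b) (a*c) (b*c) (a*e) (d*c) (d*e - f*(b::'k::field))"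
  by (simp add: vec_eq_iff forall_3 ext2_def wedge_idx_simps upper3_def)

lemma wedge_pairing_ext2: "wedge_pairing (A *v x) (ext2 A *v y) = det A * wedge_pairing x y"
  by (simp add: wedge_pairing_def det_3 matrix_vector_mult_def sum_3 ext2_def wedge_idx_simps)
    algebra

lemma ext2_mult: "ext2 (A ** B) = ext2 A ** ext2 (B::'k::field^3^3)"
  by (simp add: vec_eq_iff forall_3 matrix_matrix_mult_def sum_3 ext2_def wedge_idx_simps) algebra

lemma ext2_one: "ext2 (mat 1) = (mat 1::'k::field^3^3)"
  by (simp add: vec_eq_iff forall_3 mat_def ext2_def wedge_idx_simps)

lemma is_rep_ext2: "is_rep G R \<Longrightarrow> is_rep G (\<lambda>g. ext2 (R g))"
  by (simp add: is_rep_def ext2_mult ext2_one)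

lemma wedge_dual_reps_ext2:
  assumes "group G" "is_rep G R"
  shows "wedge_dual_reps G R (\<lambda>g. ext2 (R g))"
  using assms is_rep_ext2 wedge_pairing_ext2 by (intro wedge_dual_reps.intro) blast+

theorem mainTheorem10:
  fixes G :: "('g, 'h) monoid_scheme"
    and p :: nat
    and \<omega> chi1 chi2 chi3 \<delta>a \<delta>b \<epsilon> :: "'g \<Rightarrow> 'k::alg_closed_field"
    and \<rho> :: "'g \<Rightarrow> 'k ^3 ^3"
  assumes "group G"
    and "prime p" and "CHAR('k) = p"
    and "is_character G \<omega>"
    and "is_character G chi1" and "is_character G chi2" and "is_character G chi3"
    and "is_rep G \<rho>"
    and "\<forall>g\<in>carrier G. \<rho> g = upper3 (chi1 g) (chi2 g) (chi3 g) (\<delta>a g) (\<delta>b g) (\<epsilon> g)"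
    and "generic_pair G \<omega> chi1 chi2" and "generic_pair G \<omega> chi2 chi1"
    and "generic_pair G \<omega> chi1 chi3" and "generic_pair G \<omega> chi3 chi1"
    and "generic_pair G \<omega> chi2 chi3" and "generic_pair G \<omega> chi3 chi2"
  shows "rep_length G (\<lambda>g. ext2 (\<rho> g)) = 3
    \<and> (\<exists>W1 W2. comp_series G (\<lambda>g. ext2 (\<rho> g)) [{0}, W1, W2, UNIV]
          \<and> factor_is G (\<lambda>g. ext2 (\<rho> g)) {0} W1 (\<lambda>g. chi1 g * chi2 g)
          \<and> factor_is G (\<lambda>g. ext2 (\<rho> g)) W1 W2 (\<lambda>g. chi1 g * chi3 g)
          \<and> factor_is G (\<lambda>g. ext2 (\<rho> g)) W2 UNIV (\<lambda>g. chi2 g * chi3 g))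
    \<and> socle_dim G (\<lambda>g. ext2 (\<rho> g)) = cosocle_dim G \<rho>
    \<and> cosocle_dim G (\<lambda>g. ext2 (\<rho> g)) = socle_dim G \<rho>"
proof -
  have triangular: "upper_triangular_rep G (\<lambda>g. ext2 (\<rho> g))
      (\<lambda>g. chi1 g * chi2 g) (\<lambda>g. chi1 g * chi3 g) (\<lambda>g. chi2 g * chi3 g)"
    using assms(9) by (auto simp: upper_triangular_rep_def ext2_upper3)
  interpret wedge_dual_reps G \<rho> "\<lambda>g. ext2 (\<rho> g)"
    using \<open>group G\<close> \<open>is_rep G \<rho>\<close> by (rule wedge_dual_reps_ext2)
  show ?thesis
    using rep_length_upper_triangular[OF triangular] comp_series_flag[OF triangular]
      socle_dim_eq_cosocle_dim cosocle_dim_eq_socle_dim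
    by blast
qed

end
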